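(* Take the special vertex $v=0$. Let $I,J$ be non-crossing $m$-subsets of $\{1,\dots,n\}$ (equivalently $\operatorname{Ext}^1_A(M_I,M_J)=0$). Then $$c(I,J)=\kappa(M_J,M_I)-\kappa(M_I,M_J),$$ where $c(I,J)$ is the exponent in the quasi-commutation relation $\Delta_q^I\Delta_q^J=q^{c(I,J)}\Delta_q^J\Delta_q^I$ of quantum minors in the quantum Grassmannian.
   Context: Fix integers $1\le m<n$. $A$ is the quotient of the complete path algebra of the quiver with vertices $\mathbb{Z}_n$ and arrows $x_a\colon a-1\to a$, $y_a\colon a\to a-1$ ($a\in\{1,\dots,n\}$) by the relations $xy=yx$, $x^m=y^{n-m}$ at every vertex; centre $Z=\mathbb{C}[[t]]$; $\operatorname{CM}(A)$ is the category of finitely generated $A$-modules free over $Z$. For an $m$-subset $I$, $M_I$ has $e_jM_I=Z$ for all $j$, $x_a$ acting by $1$ if $a\in I$ and $t$ otherwise, $y_a$ acting by $t$ if $a\in I$ and $1$ otherwise. $\kappa(M,N)=\dim_{\mathbb{C}}\operatorname{coker}\big(\operatorname{Hom}_A(M,N)\to\operatorname{Hom}_Z(e_vM,e_vN)\big)$. Two $m$-subsets $I,J$ are non-crossing if either (i) $J\setminus I=J'\sqcup J''$ with $J'<(I\setminus J)<J''$, or (ii) $I\setminus J=I'\sqcup I''$ with $I'<(J\setminus I)<I''$ (where $X<Y$ means every element of $X$ is less than every element of $Y$); then $c(I,J)=|J''|-|J'|$ in case (i) and $c(I,J)=|I'|-|I''|$ in case (ii) (these agree if both hold). The quantum Grassmannian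 $\mathbb{C}_q[\operatorname{Gr}(m,n)]$ is the subalgebra of the quantum matrix algebra $\mathbb{C}_q[M_{m\times n}]$ generated by the quantum minors $\Delta_q^I=\sum_{\sigma\in S_m}(-q)^{\ell(\sigma)}x_{1,i_{\sigma(1)}}\cdots x_{m,i_{\sigma(m)}}$ ($I=\{i_1<\dots<i_m\}$), where $\mathbb{C}_q[M_{m\times n}]$ is generated over $\mathbb{C}[q^{\pm1}]$ by $x_{ij}$ with relations $x_{ij}x_{st}=qx_{st}x_{ij}$ if $i=s,j<t$ or $i<s,j=t$; $x_{ij}x_{st}=x_{st}x_{ij}$ if $i<s,j>t$; $x_{ij}x_{st}=x_{st}x_{ij}+(q-q^{-1})x_{sj}x_{it}$ if $i<s,j<t$. It is known (Leclerc–Zelevinsky) that for non-crossing $I,J$, $\Delta_q^I\Delta_q^J=q^{c(I,J)}\Delta_q^J\Delta_q^I$. *)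

theory Defs
  imports "HOL-Computational_Algebra.Formal_Power_Series" "HOL-Library.Extended_Nat"
begin

(* Centre Z = C[[t]], t = fps_X.  Vertices of the cyclic quiver Z_n are 0..n-1;
   arrow x_a : a-1 -> (a mod n), y_a : (a mod n) -> a-1 for a in {1..n}. *)
type_synonym Zs = "complex fps"

(* action of x_a and y_a on M_I (every e_j M_I = Z) *)
definition xact :: "nat set \<Rightarrow> nat \<Rightarrow> Zs" where
  "xact I a = (if a \<in> I then 1 else fps_X)"

definition yact :: "nat set \<Rightarrow> nat \<Rightarrow> Zs" where
  "yact I a = (if a \<in> I then fps_X else 1)"

definition zlinear :: "(Zs \<Rightarrow> Zs) \<Rightarrow> bool" where
  "zlinear f \<longleftrightarrow> (\<forall>a u w. f (a * u + w) = a * f u + f w)"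

(* Hom_A(M_I, M_J): families of Z-linear maps phi_j : e_j M_I -> e_j M_J (j in Z_n)
   commuting with the actions of all arrows x_a, y_a *)
definition homA :: "nat \<Rightarrow> nat set \<Rightarrow> nat set \<Rightarrow> (nat \<Rightarrow> Zs \<Rightarrow> Zs) set" where
  "homA n I J = {\<phi>. (\<forall>j<n. zlinear (\<phi> j)) \<and>
      (\<forall>a\<in>{1..n}. \<forall>s.
         \<phi> (a mod n) (xact I a * s) = xact J a * \<phi> (a - 1) s \<and>
         \<phi> (a - 1) (yact I a * s) = yact J a * \<phi> (a mod n) s)}"

(* kappa(M_I, M_J) at vertex v: C-dimension of the cokernel of the restriction map
   Hom_A(M_I,M_J) -> Hom_Z(e_v M_I, e_v M_J), i.e. the least number of elements of
   Hom_Z(Z,Z) spanning it modulo the image (infinity if there is no finite such set). *)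
definition kappa :: "nat \<Rightarrow> nat \<Rightarrow> nat set \<Rightarrow> nat set \<Rightarrow> enat" where
  "kappa n v I J = Inf {enat k | k. \<exists>g :: nat \<Rightarrow> Zs \<Rightarrow> Zs. (\<forall>i<k. zlinear (g i)) \<and>
      (\<forall>f. zlinear f \<longrightarrow> (\<exists>\<phi>\<in>homA n I J. \<exists>c :: nat \<Rightarrow> complex.
          f = (\<lambda>s. \<phi> v s + (\<Sum>i<k. fps_const (c i) * g i s))))}"

definition set_less :: "nat set \<Rightarrow> nat set \<Rightarrow> bool" where
  "set_less X Y \<longleftrightarrow> (\<forall>x\<in>X. \<forall>y\<in>Y. x < y)"

definition nc_i :: "nat set \<Rightarrow> nat set \<Rightarrow> nat set \<Rightarrow> nat set \<Rightarrow> bool" where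
  "nc_i I J J' J'' \<longleftrightarrow> J - I = J' \<union> J'' \<and> J' \<inter> J'' = {} \<and>
      set_less J' (I - J) \<and> set_less (I - J) J''"

definition nc_ii :: "nat set \<Rightarrow> nat set \<Rightarrow> nat set \<Rightarrow> nat set \<Rightarrow> bool" where
  "nc_ii I J I' I'' \<longleftrightarrow> I - J = I' \<union> I'' \<and> I' \<inter> I'' = {} \<and>
      set_less I' (J - I) \<and> set_less (J - I) I''"

definition noncrossing :: "nat set \<Rightarrow> nat set \<Rightarrow> bool" where
  "noncrossing I J \<longleftrightarrow> (\<exists>J' J''. nc_i I J J' J'') \<or> (\<exists>I' I''. nc_ii I J I' I'')"

definition cexp :: "nat set \<Rightarrow> nat set \<Rightarrow> int" where
  "cexp I J = (if (\<exists>J' J''. nc_i I J J' J'')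
     then (SOME k. \<exists>J' J''. nc_i I J J' J'' \<and> k = int (card J'') - int (card J'))
     else (SOME k. \<exists>I' I''. nc_ii I J I' I'' \<and> k = int (card I') - int (card I'')))"

end

theory Submission
  imports Defs
begin

(* A Z-linear map Z \<rightarrow> Z is multiplication by its value at 1, so a morphism M_I \<rightarrow> M_J is a
   family of power series \<phi>_j, and the arrows x_a, y_a force t^[a \<in> J\I] \<phi>_a = t^[a \<in> I\J] \<phi>_(a-1).
   Going around the cycle from vertex 0, the image of Hom_A(M_I, M_J) at vertex 0 is t^K Z, where K is
   the largest excess of |(J\I) \<inter> [1,a]| over |(I\J) \<inter> [1,a]|; hence \<kappa>(M_I, M_J) = dim Z/t^K Z = K.
   In the non-crossing case (i) this excess is maximal right after J', where it equals |J'|, and for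
   the reversed pair it is maximal right after I\J, where it equals |J''|. *)

unbundle fps_syntax

lemma zlinear_eq_mult:
  assumes "zlinear f" shows "f s = s * f 1"
proof -
  have "f (1 * 0 + 0) = 1 * f 0 + f 0" using assms unfolding zlinear_def by blast
  then have "f 0 = 0" by simp
  moreover have "f (s * 1 + 0) = s * f 1 + f 0" using assms unfolding zlinear_def by blast
  ultimately show ?thesis by simp
qed

lemma zlinear_mult_right: "zlinear (\<lambda>s. s * c)"
  unfolding zlinear_def by (simp add: algebra_simps)

definition fps_scale :: "complex \<Rightarrow> Zs \<Rightarrow> Zs" where
  "fps_scale c u = fps_const c * u"

interpretation fps_vs: vector_space fps_scale
  by unfold_locales
    (simp_all add: fps_scale_def algebra_simps flip: fps_const_add fps_const_mult)

lemma inj_Xpow: "inj (\<lambda>l::nat. (fps_X :: Zs) ^ l)"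
proof (rule injI)
  fix i j :: nat assume "(fps_X :: Zs) ^ i = fps_X ^ j"
  then have "(fps_X ^ i :: Zs) $ i = (fps_X ^ j) $ i" by simp
  then show "i = j" by (simp add: fps_X_power_nth split: if_splits)
qed

lemma independent_Xpow: "fps_vs.independent ((\<lambda>l. (fps_X :: Zs) ^ l) ` {..<K})"
proof (rule fps_vs.independent_if_scalars_zero)
  fix c x assume sum0: "(\<Sum>y\<in>(\<lambda>l. (fps_X :: Zs) ^ l) ` {..<K}. fps_scale (c y) y) = 0"
    and "x \<in> (\<lambda>l. (fps_X :: Zs) ^ l) ` {..<K}"
  then obtain l where l: "l < K" "x = fps_X ^ l" by auto
  have "0 = (\<Sum>j<K. fps_scale (c (fps_X ^ j)) (fps_X ^ j) $ l)"
    using arg_cong[OF sum0, of "\<lambda>u. u $ l"]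
    by (simp add: fps_sum_nth sum.reindex inj_on_subset[OF inj_Xpow])
  also have "\<dots> = (\<Sum>j<K. if j = l then c x else 0)"
    using l by (intro sum.cong) (auto simp: fps_scale_def fps_X_power_nth)
  finally show "c x = 0" using l by simp
qed simp

lemma fps_cutoff_eq_sum: "fps_cutoff K u = (\<Sum>i<K. fps_const (u $ i) * fps_X ^ i)"
  by (rule fps_ext) (simp add: fps_sum_nth fps_X_power_nth mult_delta_right)

lemma card_le_if_Xpow_spanned_mod_Xpow:
  fixes u :: "nat \<Rightarrow> Zs"
  assumes "\<And>l. l < K \<Longrightarrow> \<exists>w c. fps_X ^ l = fps_X ^ K * w + (\<Sum>i<k. fps_const (c i) * u i)"
  shows "K \<le> k"
proof -
  let ?T = "(\<lambda>i. fps_cutoff K (u i)) ` {..<k}"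
  have "(\<lambda>l. (fps_X :: Zs) ^ l) ` {..<K} \<subseteq> fps_vs.span ?T"
  proof clarify
    fix l :: nat assume "l < K"
    then obtain w c where eq: "fps_X ^ l = fps_X ^ K * w + (\<Sum>i<k. fps_const (c i) * u i)"
      using assms by blast
    have "fps_X ^ l = fps_cutoff K ((fps_X :: Zs) ^ l)"
      using \<open>l < K\<close> by (intro fps_ext) (simp add: fps_X_power_nth)
    also have "\<dots> = (\<Sum>i<k. fps_scale (c i) (fps_cutoff K (u i)))"
      unfolding eq by (intro fps_ext) (simp add: fps_sum_nth fps_scale_def fps_X_power_mult_nth)
    also have "\<dots> \<in> fps_vs.span ?T"
      by (intro fps_vs.span_sum fps_vs.span_scale fps_vs.span_base) auto
    finally show "fps_X ^ l \<in> fps_vs.span ?T" .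
  qed
  then have "card ((\<lambda>l. (fps_X :: Zs) ^ l) ` {..<K}) \<le> card ?T"
    using fps_vs.independent_span_bound[OF _ independent_Xpow] by simp
  also have "\<dots> \<le> k" using card_image_le[of "{..<k}"] by simp
  finally show ?thesis by (simp add: card_image inj_on_subset[OF inj_Xpow])
qed

lemma kappa_le_enat:
  assumes image_sup: "\<And>w. \<exists>\<phi>\<in>homA n I J. \<forall>s. \<phi> v s = s * (fps_X ^ K * w)"
  shows "kappa n v I J \<le> enat K"
proof -
  have "\<exists>\<phi>\<in>homA n I J. \<exists>c :: nat \<Rightarrow> complex.
      f = (\<lambda>s. \<phi> v s + (\<Sum>i<K. fps_const (c i) * (s * fps_X ^ i)))" if "zlinear f" for f
  proof -
    obtain \<phi> where \<phi>: "\<phi> \<in> homA n I J" "\<forall>s. \<phi> v s = s * (fps_X ^ K * fps_shift K (f 1))"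
      using image_sup by blast
    have "f = (\<lambda>s. \<phi> v s + (\<Sum>i<K. fps_const (f 1 $ i) * (s * fps_X ^ i)))"
    proof
      fix s
      have "f s = s * (fps_X ^ K * fps_shift K (f 1) + fps_cutoff K (f 1))"
        unfolding fps_shift_cutoff' by (rule zlinear_eq_mult[OF that])
      then show "f s = \<phi> v s + (\<Sum>i<K. fps_const (f 1 $ i) * (s * fps_X ^ i))"
        by (simp add: \<phi>(2) fps_cutoff_eq_sum distrib_left sum_distrib_left mult.left_commute)
    qed
    with \<phi>(1) show ?thesis by blast
  qed
  then have "\<exists>g :: nat \<Rightarrow> Zs \<Rightarrow> Zs. (\<forall>i<K. zlinear (g i)) \<and>
      (\<forall>f. zlinear f \<longrightarrow> (\<exists>\<phi>\<in>homA n I J. \<exists>c :: nat \<Rightarrow> complex.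
        f = (\<lambda>s. \<phi> v s + (\<Sum>i<K. fps_const (c i) * g i s))))"
    using zlinear_mult_right by (intro exI[of _ "\<lambda>i s. s * fps_X ^ i"]) blast
  then show ?thesis unfolding kappa_def by (intro Inf_lower CollectI exI[of _ K] conjI refl)
qed

lemma enat_le_kappa:
  assumes image_sub: "\<And>\<phi>. \<phi> \<in> homA n I J \<Longrightarrow> fps_X ^ K dvd \<phi> v 1"
  shows "enat K \<le> kappa n v I J"
  unfolding kappa_def
proof (rule Inf_greatest, elim CollectE exE conjE)
  fix x k and g :: "nat \<Rightarrow> Zs \<Rightarrow> Zs"
  assume x: "x = enat k" and spans: "\<forall>f. zlinear f \<longrightarrow> (\<exists>\<phi>\<in>homA n I J. \<exists>c :: nat \<Rightarrow> complex.
      f = (\<lambda>s. \<phi> v s + (\<Sum>i<k. fps_const (c i) * g i s)))"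
  have "K \<le> k"
  proof (rule card_le_if_Xpow_spanned_mod_Xpow)
    fix l :: nat
    obtain \<phi> c where "\<phi> \<in> homA n I J"
      and eq: "(\<lambda>s. s * fps_X ^ l) = (\<lambda>s. \<phi> v s + (\<Sum>i<k. fps_const (c i) * g i s))"
      using spans zlinear_mult_right by blast
    have "fps_X ^ l = \<phi> v 1 + (\<Sum>i<k. fps_const (c i) * g i 1)"
      using fun_cong[OF eq, of 1] by simp
    moreover obtain w where "\<phi> v 1 = fps_X ^ K * w"
      using image_sub[OF \<open>\<phi> \<in> homA n I J\<close>] by (elim dvdE)
    ultimately show "\<exists>w c. fps_X ^ l = fps_X ^ K * w + (\<Sum>i<k. fps_const (c i) * g i 1)"
      by (intro exI[of _ w] exI[of _ c]) simp
  qed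
  with x show "enat K \<le> x" by simp
qed

lemma arrow_relations_iff:
  "(xact I b * u' = xact J b * u \<and> yact I b * u = yact J b * u') \<longleftrightarrow>
     fps_X ^ of_bool (b \<in> J - I) * u' = fps_X ^ of_bool (b \<in> I - J) * u"
  by (cases "b \<in> I"; cases "b \<in> J") (auto simp: xact_def yact_def)

lemma homA_arrow:
  assumes "0 < n" "\<phi> \<in> homA n I J" "b \<in> {1..n}"
  shows "fps_X ^ of_bool (b \<in> J - I) * \<phi> (b mod n) 1 = fps_X ^ of_bool (b \<in> I - J) * \<phi> (b - 1) 1"
proof -
  have "b mod n < n" "b - 1 < n" using assms by auto
  then have "\<phi> (b mod n) s = s * \<phi> (b mod n) 1" "\<phi> (b - 1) s = s * \<phi> (b - 1) 1" for s
    using assms(2) zlinear_eq_mult by (auto simp: homA_def)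
  moreover have "\<phi> (b mod n) (xact I b * s) = xact J b * \<phi> (b - 1) s \<and>
      \<phi> (b - 1) (yact I b * s) = yact J b * \<phi> (b mod n) s" for s
    using assms(2,3) unfolding homA_def by blast
  ultimately show ?thesis
    unfolding arrow_relations_iff[symmetric] by (metis mult.commute mult_1)
qed

lemma mult_family_in_homA:
  assumes "\<And>b. b \<in> {1..n} \<Longrightarrow>
    fps_X ^ of_bool (b \<in> J - I) * c (b mod n) = fps_X ^ of_bool (b \<in> I - J) * c (b - 1)"
  shows "(\<lambda>j s. s * c j) \<in> homA n I J"
  unfolding homA_def
proof (intro CollectI conjI allI ballI)
  fix b s assume "b \<in> {1..n}"
  then have "xact I b * c (b mod n) = xact J b * c (b - 1) \<and> yact I b * c (b - 1) = yact J b * c (b mod n)"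
    using assms arrow_relations_iff by blast
  then show "xact I b * s * c (b mod n) = xact J b * (s * c (b - 1))"
    and "yact I b * s * c (b - 1) = yact J b * (s * c (b mod n))"
    by (simp_all add: ac_simps)
qed (simp add: zlinear_mult_right)

definition card_upto :: "nat set \<Rightarrow> nat \<Rightarrow> nat" where
  "card_upto X a = card (X \<inter> {1..a})"

lemma card_upto_0 [simp]: "card_upto X 0 = 0"
  by (simp add: card_upto_def)

lemma card_upto_Suc: "card_upto X (Suc a) = card_upto X a + of_bool (Suc a \<in> X)"
proof -
  have "X \<inter> {1..Suc a} = (if Suc a \<in> X then insert (Suc a) (X \<inter> {1..a}) else X \<inter> {1..a})"
    by (auto simp: le_Suc_eq)
  then show ?thesis by (simp add: card_upto_def)
qed

lemma card_upto_eq_card: "X \<subseteq> {1..a} \<Longrightarrow> card_upto X a = card X"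
  by (simp add: card_upto_def Int_absorb2)

lemma card_upto_le: "finite Y \<Longrightarrow> X \<inter> {1..a} \<subseteq> Y \<Longrightarrow> card_upto X a \<le> card Y"
  unfolding card_upto_def by (rule card_mono)

lemma card_le_card_upto: "Y \<subseteq> X \<inter> {1..a} \<Longrightarrow> card Y \<le> card_upto X a"
  unfolding card_upto_def by (rule card_mono) simp

lemma homA_transport:
  assumes "0 < n" "\<phi> \<in> homA n I J" "a \<le> n"
  shows "fps_X ^ card_upto (J - I) a * \<phi> (a mod n) 1 = fps_X ^ card_upto (I - J) a * \<phi> 0 1"
  using assms(3)
proof (induction a)
  case (Suc a)
  have "a mod n = a" using Suc.prems by simp
  have step: "fps_X ^ of_bool (Suc a \<in> J - I) * \<phi> (Suc a mod n) 1 = fps_X ^ of_bool (Suc a \<in> I - J) * \<phi> a 1"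
    using homA_arrow[OF assms(1,2), of "Suc a"] Suc.prems by simp
  have "fps_X ^ card_upto (J - I) (Suc a) * \<phi> (Suc a mod n) 1
      = fps_X ^ card_upto (J - I) a * (fps_X ^ of_bool (Suc a \<in> J - I) * \<phi> (Suc a mod n) 1)"
    by (simp add: card_upto_Suc power_add mult.assoc)
  also have "\<dots> = fps_X ^ of_bool (Suc a \<in> I - J) * (fps_X ^ card_upto (J - I) a * \<phi> (a mod n) 1)"
    unfolding step \<open>a mod n = a\<close> by (simp add: mult.left_commute)
  also have "\<dots> = fps_X ^ card_upto (I - J) (Suc a) * \<phi> 0 1"
    using Suc by (simp add: card_upto_Suc power_add mult.assoc)
  finally show ?case .
qed simp

lemma homA_exists_at_0:
  assumes "I \<subseteq> {1..n}" "J \<subseteq> {1..n}" "card (I - J) = card (J - I)"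
    and bound: "\<forall>a\<le>n. card_upto (J - I) a \<le> K + card_upto (I - J) a"
  shows "\<exists>\<phi>\<in>homA n I J. \<forall>s. \<phi> 0 s = s * (fps_X ^ K * w)"
proof -
  \<comment> \<open>the exponent of t in \<phi>_a; by \<open>bound\<close> the truncated subtraction never cuts off\<close>
  define E where "E a = K + card_upto (I - J) a - card_upto (J - I) a" for a
  have "E 0 = K" by (simp add: E_def)
  have "E n = K" using assms(1-3) by (simp add: E_def card_upto_eq_card subset_iff)
  have "(\<lambda>j s. s * (fps_X ^ E j * w)) \<in> homA n I J"
  proof (rule mult_family_in_homA)
    fix b assume b: "b \<in> {1..n}"
    then obtain p where p: "b = Suc p" "Suc p \<le> n" by (cases b) auto
    have "E b + of_bool (b \<in> J - I) = E p + of_bool (b \<in> I - J)"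
      using bound[rule_format, of p] bound[rule_format, of b] p by (auto simp: E_def card_upto_Suc)
    moreover have "E (b mod n) = E b" using b \<open>E 0 = K\<close> \<open>E n = K\<close> by (cases "b = n") auto
    ultimately show "fps_X ^ of_bool (b \<in> J - I) * (fps_X ^ E (b mod n) * w) =
        fps_X ^ of_bool (b \<in> I - J) * (fps_X ^ E (b - 1) * w)"
      using p by (simp add: mult.assoc[symmetric] power_add[symmetric] add.commute)
  qed
  then show ?thesis using \<open>E 0 = K\<close> by force
qed

lemma kappa_at_0:
  assumes "0 < n" "I \<subseteq> {1..n}" "J \<subseteq> {1..n}" "card (I - J) = card (J - I)"
    and attained: "\<exists>a\<le>n. K + card_upto (I - J) a \<le> card_upto (J - I) a"
    and bound: "\<forall>a\<le>n. card_upto (J - I) a \<le> K + card_upto (I - J) a"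
  shows "kappa n 0 I J = enat K"
proof (rule antisym)
  show "kappa n 0 I J \<le> enat K"
    using homA_exists_at_0[OF assms(2-4) bound] by (intro kappa_le_enat) blast
  show "enat K \<le> kappa n 0 I J"
  proof (rule enat_le_kappa)
    fix \<phi> assume "\<phi> \<in> homA n I J"
    obtain a where "a \<le> n" "K + card_upto (I - J) a \<le> card_upto (J - I) a"
      using attained by blast
    then have "fps_X ^ (K + card_upto (I - J) a) dvd (fps_X :: Zs) ^ card_upto (J - I) a"
      by (simp add: le_imp_power_dvd)
    then have "fps_X ^ card_upto (I - J) a * fps_X ^ K dvd fps_X ^ card_upto (I - J) a * \<phi> 0 1"
      unfolding homA_transport[OF assms(1) \<open>\<phi> \<in> homA n I J\<close> \<open>a \<le> n\<close>, symmetric]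
      by (simp add: power_add mult.commute)
    then show "fps_X ^ K dvd \<phi> 0 1" by simp
  qed
qed

locale split_around =
  fixes P Q J' J'' :: "nat set" and n :: nat
  assumes P_sub: "P \<subseteq> {1..n}" and Q_sub: "Q \<subseteq> {1..n}" and card_eq: "card Q = card P"
    and split: "P = J' \<union> J''" "J' \<inter> J'' = {}"
    and J'_less: "set_less J' Q" and less_J'': "set_less Q J''"
begin

lemma finite_P: "finite P" and finite_Q: "finite Q" and finite_J': "finite J'"
  and finite_J'': "finite J''"
  using P_sub Q_sub split(1) by (auto intro: finite_subset)

lemma card_Q_split: "card Q = card J' + card J''"
  using card_eq split finite_J' finite_J'' by (simp add: card_Un_disjoint)

lemma excess_attained_left: "\<exists>a\<le>n. card J' + card_upto Q a \<le> card_upto P a"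
proof (cases "J' = {}")
  case False
  define a where "a = Max J'"
  have "a \<in> J'" using False finite_J' by (simp add: a_def)
  then have "\<forall>x\<in>Q. a < x" using J'_less unfolding set_less_def by blast
  then have "Q \<inter> {1..a} = {}" by (meson Int_iff atLeastAtMost_iff disjoint_iff not_le)
  then have "card_upto Q a = 0" by (simp add: card_upto_def)
  moreover have "card J' \<le> card_upto P a"
    using split P_sub finite_J' by (intro card_le_card_upto) (auto simp: a_def)
  moreover have "a \<le> n" using \<open>a \<in> J'\<close> split P_sub by auto
  ultimately show ?thesis by auto
qed auto

lemma excess_bound_left: "card_upto P a \<le> card J' + card_upto Q a"
proof (cases "\<exists>y\<in>J''. y \<le> a")
  case True
  then obtain y where "y \<in> J''" "y \<le> a" by blast
  have "Q \<subseteq> {1..a}"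
  proof
    fix x assume "x \<in> Q"
    then have "x < y" "1 \<le> x"
      using less_J'' \<open>y \<in> J''\<close> Q_sub unfolding set_less_def by auto
    then show "x \<in> {1..a}" using \<open>y \<le> a\<close> by simp
  qed
  then have "card_upto Q a = card P" using card_eq by (simp add: card_upto_eq_card)
  moreover have "card_upto P a \<le> card P" using finite_P by (rule card_upto_le) blast
  ultimately show ?thesis by simp
next
  case False
  then have "P \<inter> {1..a} \<subseteq> J'" using split by auto
  then have "card_upto P a \<le> card J'" by (rule card_upto_le[OF finite_J'])
  then show ?thesis by simp
qed

lemma excess_attained_right: "\<exists>a\<le>n. card J'' + card_upto P a \<le> card_upto Q a"
proof (cases "Q = {}")
  case False
  define a where "a = Max Q"
  have "a \<in> Q" unfolding a_def using finite_Q False by (rule Max_in)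
  have "card_upto Q a = card Q"
    using finite_Q Q_sub by (intro card_upto_eq_card) (auto simp: a_def)
  moreover have "P \<inter> {1..a} \<subseteq> J'"
  proof
    fix x assume x: "x \<in> P \<inter> {1..a}"
    have "x \<notin> J''"
    proof
      assume "x \<in> J''"
      then have "a < x" using less_J'' \<open>a \<in> Q\<close> unfolding set_less_def by blast
      then show False using x by simp
    qed
    then show "x \<in> J'" using x split(1) by blast
  qed
  then have "card_upto P a \<le> card J'" by (rule card_upto_le[OF finite_J'])
  moreover have "a \<le> n" using \<open>a \<in> Q\<close> Q_sub by auto
  ultimately show ?thesis using card_Q_split by (intro exI[of _ a]) auto
next
  case True
  then have "J'' = {}" using card_Q_split finite_J'' by simp
  then show ?thesis by auto
qed

lemma excess_bound_right: "card_upto Q a \<le> card J'' + card_upto P a"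
proof (cases "\<exists>x\<in>Q. x \<le> a")
  case True
  then obtain x where "x \<in> Q" "x \<le> a" by blast
  have "J' \<subseteq> P \<inter> {1..a}"
  proof
    fix z assume "z \<in> J'"
    then have "z < x" "z \<in> P" "1 \<le> z"
      using J'_less \<open>x \<in> Q\<close> split(1) P_sub unfolding set_less_def by auto
    then show "z \<in> P \<inter> {1..a}" using \<open>x \<le> a\<close> by simp
  qed
  then have "card J' \<le> card_upto P a" by (rule card_le_card_upto)
  then show ?thesis using card_upto_le[OF finite_Q, of Q a] card_Q_split by auto
next
  case False
  then have "card_upto Q a = 0" by (auto simp: card_upto_def)
  then show ?thesis by simp
qed

end

lemma kappa_nc_i:
  assumes "0 < n" "I \<subseteq> {1..n}" "J \<subseteq> {1..n}" "card (I - J) = card (J - I)"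
    and "nc_i I J J' J''"
  shows "kappa n 0 I J = enat (card J')" and "kappa n 0 J I = enat (card J'')"
proof -
  interpret split_around "J - I" "I - J" J' J'' n
    using assms(2-5) by unfold_locales (auto simp: nc_i_def)
  show "kappa n 0 I J = enat (card J')"
    using excess_attained_left excess_bound_left by (intro kappa_at_0[OF assms(1-4)]) auto
  show "kappa n 0 J I = enat (card J'')"
    using excess_attained_right excess_bound_right
    by (intro kappa_at_0[OF assms(1,3,2) assms(4)[symmetric]]) auto
qed

(* cexp is well defined: |J'| and |J''| are determined by I and J, being values of \<kappa>. *)
lemma cexp_nc_i:
  assumes "0 < n" "I \<subseteq> {1..n}" "J \<subseteq> {1..n}" "card (I - J) = card (J - I)"
    and "nc_i I J J' J''"
  shows "cexp I J = int (card J'') - int (card J')"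
proof -
  have "(SOME k. \<exists>A B. nc_i I J A B \<and> k = int (card B) - int (card A)) = int (card J'') - int (card J')"
  proof (rule some_equality)
    fix k assume "\<exists>A B. nc_i I J A B \<and> k = int (card B) - int (card A)"
    then obtain A B where AB: "nc_i I J A B" and k: "k = int (card B) - int (card A)" by blast
    have "enat (card A) = enat (card J')" "enat (card B) = enat (card J'')"
      using kappa_nc_i[OF assms(1-4)] AB assms(5) by metis+
    then show "k = int (card J'') - int (card J')" using k by simp
  qed (use assms(5) in blast)
  then show ?thesis using assms(5) unfolding cexp_def by auto
qed

lemma nc_ii_iff_nc_i_swap: "nc_ii I J A B \<longleftrightarrow> nc_i J I A B"
  by (simp add: nc_i_def nc_ii_def)

lemma cexp_nc_ii:
  assumes "0 < n" "I \<subseteq> {1..n}" "J \<subseteq> {1..n}" "card (I - J) = card (J - I)"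
    and "\<not> (\<exists>J' J''. nc_i I J J' J'')" and "nc_ii I J I' I''"
  shows "cexp I J = int (card I') - int (card I'')"
proof -
  have "(SOME k. \<exists>A B. nc_ii I J A B \<and> k = int (card A) - int (card B)) = int (card I') - int (card I'')"
  proof (rule some_equality)
    fix k assume "\<exists>A B. nc_ii I J A B \<and> k = int (card A) - int (card B)"
    then obtain A B where AB: "nc_i J I A B" and k: "k = int (card A) - int (card B)"
      by (auto simp: nc_ii_iff_nc_i_swap)
    have "enat (card A) = enat (card I')" "enat (card B) = enat (card I'')"
      using kappa_nc_i[OF assms(1,3,2) assms(4)[symmetric]] AB assms(6)
      unfolding nc_ii_iff_nc_i_swap by metis+
    then show "k = int (card I') - int (card I'')" using k by simp
  qed (use assms(6) in blast)
  then show ?thesis using assms(5) unfolding cexp_def by auto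
qed

theorem theorem6p5:
  fixes m n :: nat and I J :: "nat set"
  assumes "1 \<le> m" and "m < n"
    and "I \<subseteq> {1..n}" and "J \<subseteq> {1..n}" and "card I = m" and "card J = m"
    and "noncrossing I J"
  shows "\<exists>a b :: nat. kappa n 0 J I = enat a \<and> kappa n 0 I J = enat b \<and>
           cexp I J = int a - int b"
proof -
  have "0 < n" using assms(2) by simp
  have "finite I" "finite J" using assms(3,4) by (auto intro: finite_subset)
  then have balanced: "card (I - J) = card (J - I)"
    using assms(5,6) by (simp add: card_Diff_subset_Int Int_commute)
  note facts = \<open>0 < n\<close> assms(3,4) balanced
  show ?thesis
  proof (cases "\<exists>J' J''. nc_i I J J' J''")
    case True
    then obtain J' J'' where "nc_i I J J' J''" by blast
    then show ?thesis
      using kappa_nc_i[OF facts] cexp_nc_i[OF facts] by blast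
  next
    case False
    then obtain I' I'' where "nc_ii I J I' I''" using assms(7) by (auto simp: noncrossing_def)
    moreover note kappa_nc_i[OF \<open>0 < n\<close> assms(4,3) balanced[symmetric],
      folded nc_ii_iff_nc_i_swap]
    ultimately show ?thesis using cexp_nc_ii[OF facts False] by blast
  qed
qed

end
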